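(* Let $\mathcal X\subseteq[0,1]$ be a Borel set with $0,1\in\mathcal X$, fix $\mu\in(0,1)$, and let $\mathcal H_\mu=\{P\in\mathcal P_{\mathcal X}:\mathbb E_P[X]=\mu\}$. Define $F_\mu:\mathcal X\to[1,+\infty)$ by $F_\mu(x)=1+\frac1\mu(x-\mu)$ if $x\ge\mu$ and $F_\mu(x)=1+\frac1{\mu-1}(x-\mu)$ if $x<\mu$. Then for any $x\in\mathcal X$ there is $P_x\in\mathcal H_\mu$ such that $P_x(\{x\})=1/F_\mu(x)>0$. Moreover, $F_\mu(x)\ge E(x)$ for all $x\in\mathcal X$ and every e-variable $E$ for $\mathcal H_\mu$.
   Context: $\mathcal P_{\mathcal X}$ is the set of Borel probability measures on $\mathcal X$. An e-variable for $\mathcal H_\mu$ is a Borel $E:\mathcal X\to[0,+\infty)$ with $\mathbb E_P[E]\le1$ for all $P\in\mathcal H_\mu$. *)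

theory Defs
  imports "HOL-Probability.Probability"
begin

definition prob_measures_on :: "real set \<Rightarrow> real measure set" where
  "prob_measures_on Xs = {P. prob_space P \<and> space P = Xs \<and>
      sets P = sets (restrict_space borel Xs)}"

definition H_mu :: "real set \<Rightarrow> real \<Rightarrow> real measure set" where
  "H_mu Xs mu = {P \<in> prob_measures_on Xs.
      integrable P (\<lambda>x. x) \<and> (\<integral>x. x \<partial>P) = mu}"

definition e_variable :: "real set \<Rightarrow> real measure set \<Rightarrow> (real \<Rightarrow> real) \<Rightarrow> bool" where
  "e_variable Xs H E \<longleftrightarrow> E \<in> borel_measurable (restrict_space borel Xs) \<and>
      (\<forall>x\<in>Xs. 0 \<le> E x) \<and>
      (\<forall>P\<in>H. (\<integral>\<^sup>+ x. ennreal (E x) \<partial>P) \<le> 1)"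

definition F_mu :: "real \<Rightarrow> real \<Rightarrow> real" where
  "F_mu mu x = (if x \<ge> mu then 1 + (1 / mu) * (x - mu) else 1 + (1 / (mu - 1)) * (x - mu))"

end

theory Submission imports Defs begin

text \<open>
  The bound is attained by two-point laws. For \<open>x \<ge> \<mu>\<close> put mass \<open>\<mu>/x\<close> on \<open>x\<close> and the rest
  on \<open>0\<close>; for \<open>x < \<mu>\<close> put mass \<open>(1-\<mu>)/(1-x)\<close> on \<open>x\<close> and the rest on \<open>1\<close>. In both cases
  the mean is \<open>\<mu>\<close> and the atom at \<open>x\<close> has mass \<open>1/F\<^sub>\<mu>(x)\<close>. Conversely, if \<open>P\<close> has mean \<open>\<mu>\<close>
  and an atom of mass \<open>w\<close> at \<open>x\<close>, every e-variable satisfies \<open>E(x) w \<le> \<integral> E dP \<le> 1\<close>;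
  taking \<open>P\<close> the two-point law gives \<open>E(x) \<le> F\<^sub>\<mu>(x)\<close>.
\<close>

definition retraction_onto :: "'a set \<Rightarrow> 'a \<Rightarrow> 'a" where
  "retraction_onto A z = (if z \<in> A then z else (SOME a. a \<in> A))"

text \<open>The retraction only
  makes the push-forward land in \<open>A\<close>; it is the identity on the support of \<open>q\<close>.\<close>
definition measure_pmf_on :: "'a::topological_space set \<Rightarrow> 'a pmf \<Rightarrow> 'a measure" where
  "measure_pmf_on A q = distr (measure_pmf q) (restrict_space borel A) (retraction_onto A)"

lemma measurable_retraction_onto:
  assumes "set_pmf q \<subseteq> A"
  shows "retraction_onto A \<in> measure_pmf q \<rightarrow>\<^sub>M restrict_space borel A"
proof -
  have "A \<noteq> {}" using assms set_pmf_not_empty[of q] by blast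
  then show ?thesis by (auto simp: retraction_onto_def space_restrict_space some_in_eq)
qed

lemma
  assumes "set_pmf q \<subseteq> A"
  shows prob_space_measure_pmf_on: "prob_space (measure_pmf_on A q)"
    and space_measure_pmf_on: "space (measure_pmf_on A q) = A"
    and sets_measure_pmf_on: "sets (measure_pmf_on A q) = sets (restrict_space borel A)"
  using measure_pmf.prob_space_distr[OF measurable_retraction_onto[OF assms]]
  by (simp_all add: measure_pmf_on_def space_restrict_space)

lemma measure_pmf_on_in_prob_measures_on:
  "set_pmf q \<subseteq> Xs \<Longrightarrow> measure_pmf_on Xs q \<in> prob_measures_on Xs"
  by (simp add: prob_measures_on_def prob_space_measure_pmf_on space_measure_pmf_on
      sets_measure_pmf_on)

lemma
  fixes g :: "'a::topological_space \<Rightarrow> real"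
  assumes "set_pmf q \<subseteq> A" and g: "g \<in> borel_measurable borel"
  shows integrable_measure_pmf_on_iff: "integrable (measure_pmf_on A q) g \<longleftrightarrow> integrable q g"
    and integral_measure_pmf_on: "(\<integral>z. g z \<partial>measure_pmf_on A q) = (\<integral>z. g z \<partial>q)"
proof -
  note meas = measurable_retraction_onto[OF assms(1)]
  have g': "g \<in> borel_measurable (restrict_space borel A)"
    using g by (rule measurable_restrict_space1)
  have retract: "AE z in measure_pmf q. g (retraction_onto A z) = g z"
    using assms(1) by (auto simp: AE_measure_pmf_iff retraction_onto_def)
  show "integrable (measure_pmf_on A q) g \<longleftrightarrow> integrable q g"
    unfolding measure_pmf_on_def integrable_distr_eq[OF meas g']
    using retract by (intro integrable_cong_AE) simp_all
  show "(\<integral>z. g z \<partial>measure_pmf_on A q) = (\<integral>z. g z \<partial>q)"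
    unfolding measure_pmf_on_def integral_distr[OF meas g']
    using retract by (intro integral_cong_AE) simp_all
qed

lemma measure_measure_pmf_on:
  assumes "set_pmf q \<subseteq> A" and B: "B \<in> sets (restrict_space borel A)"
  shows "measure (measure_pmf_on A q) B = measure q B"
proof -
  have "B \<subseteq> A" using B sets.sets_into_space by (fastforce simp: space_restrict_space)
  then have "retraction_onto A -` B \<inter> set_pmf q = B \<inter> set_pmf q"
    using assms(1) by (auto simp: retraction_onto_def)
  then have "measure q (retraction_onto A -` B) = measure q B"
    by (metis measure_Int_set_pmf)
  then show ?thesis
    unfolding measure_pmf_on_def measure_distr[OF measurable_retraction_onto[OF assms(1)] B]
    by simp
qed

lemma singleton_in_sets_restrict_space:
  assumes "x \<in> A" and "{x} \<in> sets M"
  shows "{x} \<in> sets (restrict_space M A)"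
  using assms by (auto simp: sets_restrict_space image_iff intro!: bexI[of _ "{x}"])

lemma two_point_law_on:
  fixes x y p :: real
  assumes x: "x \<in> Xs" and y: "y \<in> Xs" and "x \<noteq> y" "0 \<le> p" "p \<le> 1"
  shows "\<exists>P\<in>prob_measures_on Xs. integrable P (\<lambda>z. z) \<and>
           (\<integral>z. z \<partial>P) = p * x + (1 - p) * y \<and> measure P {x} = p"
proof -
  define q where "q = map_pmf (\<lambda>b. if b then x else y) (bernoulli_pmf p)"
  have support: "set_pmf q \<subseteq> Xs" using x y by (auto simp: q_def)
  have "finite (set_pmf q)" by (simp add: q_def)
  then have "integrable (measure_pmf_on Xs q) (\<lambda>z. z)"
    using integrable_measure_pmf_on_iff[OF support] integrable_measure_pmf_finite by auto
  moreover have "(\<integral>z. z \<partial>measure_pmf_on Xs q) = p * x + (1 - p) * y"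
    using assms(4,5) by (subst integral_measure_pmf_on[OF support]) (simp_all add: q_def)
  moreover have "measure (measure_pmf_on Xs q) {x} = p"
  proof -
    have "(\<lambda>b. if b then x else y) -` {x} = {True}" using \<open>x \<noteq> y\<close> by (auto split: if_splits)
    then have "measure q {x} = p" using assms(4,5) by (simp add: q_def pmf_map measure_pmf_single)
    then show ?thesis
      using measure_measure_pmf_on[OF support singleton_in_sets_restrict_space[OF x]] by simp
  qed
  ultimately show ?thesis using measure_pmf_on_in_prob_measures_on[OF support] by blast
qed

lemma inverse_F_mu:
  assumes "0 < mu" "mu < 1"
  shows "1 / F_mu mu x = (if mu \<le> x then mu / x else (1 - mu) / (1 - x))"
proof (cases "mu \<le> x")
  case True
  with assms have "0 < x" by linarith
  with True assms show ?thesis by (simp add: F_mu_def field_simps)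
next
  case False
  with assms have "x < 1" by linarith
  with False assms show ?thesis by (simp add: F_mu_def field_simps)
qed

lemma inverse_F_mu_pos_le_1:
  assumes "0 < mu" "mu < 1" "x \<in> {0..1}"
  shows "0 < 1 / F_mu mu x" "1 / F_mu mu x \<le> 1"
  using assms unfolding inverse_F_mu[OF assms(1,2)] by (auto simp: field_simps)

lemma H_mu_atom_inverse_F_mu:
  assumes "Xs \<subseteq> {0..1}" "0 \<in> Xs" "1 \<in> Xs" "0 < mu" "mu < 1" and x: "x \<in> Xs"
  shows "\<exists>P\<in>H_mu Xs mu. measure P {x} = 1 / F_mu mu x"
proof -
  define y :: real where "y = (if mu \<le> x then 0 else 1)"
  have x01: "x \<in> {0..1}" and y: "y \<in> Xs" and "x \<noteq> y"
    using assms by (auto simp: y_def)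
  have mean: "1 / F_mu mu x * x + (1 - 1 / F_mu mu x) * y = mu"
    using assms x01 unfolding inverse_F_mu[OF assms(4,5)] y_def by (auto simp: field_simps)
  obtain P where "P \<in> prob_measures_on Xs" "integrable P (\<lambda>z. z)"
    "(\<integral>z. z \<partial>P) = 1 / F_mu mu x * x + (1 - 1 / F_mu mu x) * y" "measure P {x} = 1 / F_mu mu x"
    using two_point_law_on[OF x y \<open>x \<noteq> y\<close>] inverse_F_mu_pos_le_1[OF assms(4,5) x01]
    by (metis less_imp_le)
  then show ?thesis using mean by (auto simp: H_mu_def)
qed

lemma mult_emeasure_singleton_le_nn_integral:
  assumes "{x} \<in> sets M"
  shows "ennreal (f x) * emeasure M {x} \<le> (\<integral>\<^sup>+z. ennreal (f z) \<partial>M)"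
proof -
  have "ennreal (f x) * emeasure M {x} = (\<integral>\<^sup>+z. ennreal (f x) * indicator {x} z \<partial>M)"
    using assms by (rule nn_integral_cmult_indicator[symmetric])
  also have "\<dots> \<le> (\<integral>\<^sup>+z. ennreal (f z) \<partial>M)"
    by (intro nn_integral_mono) (auto split: split_indicator)
  finally show ?thesis .
qed

lemma e_variable_le_inverse_atom:
  assumes E: "e_variable Xs H E" and P: "P \<in> H" "P \<in> prob_measures_on Xs"
    and x: "x \<in> Xs" and atom: "0 < measure P {x}"
  shows "E x \<le> 1 / measure P {x}"
proof -
  interpret prob_space P using P(2) by (simp add: prob_measures_on_def)
  have "{x} \<in> sets P"
    using P(2) singleton_in_sets_restrict_space[OF x, of borel] by (simp add: prob_measures_on_def)
  then have "ennreal (E x) * ennreal (measure P {x}) \<le> (\<integral>\<^sup>+z. ennreal (E z) \<partial>P)"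
    unfolding emeasure_eq_measure[symmetric] by (rule mult_emeasure_singleton_le_nn_integral)
  also have "\<dots> \<le> 1" using E P(1) by (simp add: e_variable_def)
  finally have "ennreal (E x * measure P {x}) \<le> 1"
    using E x by (simp add: e_variable_def ennreal_mult)
  then have "E x * measure P {x} \<le> 1" by (simp add: ennreal_le_1)
  then show ?thesis using atom by (simp add: field_simps)
qed

theorem lemma3:
  fixes Xs :: "real set" and mu :: real
  assumes "Xs \<in> sets borel" and "Xs \<subseteq> {0..1}" and "0 \<in> Xs" and "1 \<in> Xs"
    and "0 < mu" and "mu < 1"
  shows "(\<forall>x\<in>Xs. \<exists>P\<in>H_mu Xs mu. measure P {x} = 1 / F_mu mu x \<and> 1 / F_mu mu x > 0)
       \<and> (\<forall>E. e_variable Xs (H_mu Xs mu) E \<longrightarrow> (\<forall>x\<in>Xs. F_mu mu x \<ge> E x))"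
proof -
  have atom: "\<exists>P\<in>H_mu Xs mu. measure P {x} = 1 / F_mu mu x \<and> 1 / F_mu mu x > 0"
    if x: "x \<in> Xs" for x
    using H_mu_atom_inverse_F_mu[OF assms(2-6) x] inverse_F_mu_pos_le_1(1)[OF assms(5,6)] x assms(2)
    by blast
  have "F_mu mu x \<ge> E x" if E: "e_variable Xs (H_mu Xs mu) E" and x: "x \<in> Xs" for E x
  proof -
    obtain P where P: "P \<in> H_mu Xs mu" "measure P {x} = 1 / F_mu mu x" "1 / F_mu mu x > 0"
      using atom x by blast
    then have "P \<in> prob_measures_on Xs" by (simp add: H_mu_def)
    from e_variable_le_inverse_atom[OF E P(1) this x] show ?thesis using P(2,3) by simp
  qed
  with atom show ?thesis by blast
qed

end
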